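(* Let $J$ be an abelian topological semigroup, $X$ a locally convex topological vector space over $\mathbf{C}$, and $n\in\mathbf{Z}_+$. If $P^n(J)$ is finite dimensional, then $P^n(J,X)=P^n(J)\otimes X$, i.e. every $p\in P^n(J,X)$ is of the form $p=\sum_{i=1}^l q_i x_i$ with $q_i\in P^n(J)$ and $x_i\in X$.
   Context: $\mathbf{Z}_+=\{0,1,2,\dots\}$. A continuous $p:J\to X$ is a polynomial of degree at most $n$ if for all $s,t\in J$ the map $m\mapsto p(s+mt)$, $m\in\mathbf{Z}_+$, is a polynomial in $m$ of degree at most $n$ with coefficients in $X$; $P^n(J,X)$ is the space of these, $P^n(J)=P^n(J,\mathbf{C})$. *)

theory Defs
  imports "HOL-Analysis.Analysis" "HOL-Library.Function_Algebras"
begin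

definition ab_top_semigroup :: "'j::{ab_semigroup_add,topological_space} itself \<Rightarrow> bool" where
  "ab_top_semigroup _ \<longleftrightarrow> continuous_on UNIV (\<lambda>(a::'j, b). a + b)"

definition smul_shift :: "'j::ab_semigroup_add \<Rightarrow> nat \<Rightarrow> 'j \<Rightarrow> 'j" where
  "smul_shift s m t = ((\<lambda>x. x + t) ^^ m) s"

definition convex_wrt :: "(complex \<Rightarrow> 'x \<Rightarrow> 'x::ab_group_add) \<Rightarrow> 'x set \<Rightarrow> bool" where
  "convex_wrt sc V \<longleftrightarrow> (\<forall>x\<in>V. \<forall>y\<in>V. \<forall>u::real. 0 \<le> u \<and> u \<le> 1 \<longrightarrow>
      sc (complex_of_real u) x + sc (complex_of_real (1 - u)) y \<in> V)"

text \<open>Locally convex topological vector space over C (the topology is that of the type 'x,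
  Hausdorff by the class constraint used in the statement).\<close>
definition lc_tvs :: "(complex \<Rightarrow> 'x \<Rightarrow> 'x::{ab_group_add,topological_space}) \<Rightarrow> bool" where
  "lc_tvs sc \<longleftrightarrow> vector_space sc
     \<and> continuous_on UNIV (\<lambda>(a::'x, b). a + b)
     \<and> continuous_on UNIV (\<lambda>(c, x). sc c x)
     \<and> (\<forall>U. open U \<and> 0 \<in> U \<longrightarrow> (\<exists>V. open V \<and> 0 \<in> V \<and> V \<subseteq> U \<and> convex_wrt sc V))"

definition Pn :: "(complex \<Rightarrow> 'x \<Rightarrow> 'x::{ab_group_add,topological_space}) \<Rightarrow> nat
    \<Rightarrow> ('j::{ab_semigroup_add,topological_space} \<Rightarrow> 'x) set" where
  "Pn sc n = {p. continuous_on UNIV p \<and>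
     (\<forall>s t. \<exists>c::nat \<Rightarrow> 'x. \<forall>m. p (smul_shift s m t) = (\<Sum>k\<le>n. sc (of_nat m ^ k) (c k)))}"

definition fscale :: "complex \<Rightarrow> ('j \<Rightarrow> complex) \<Rightarrow> ('j \<Rightarrow> complex)" where
  "fscale c f = (\<lambda>j. c * f j)"

end

theory Submission
  imports Defs
begin

text \<open>Write \<open>P\<close> for \<open>P\<^sup>n(J)\<close>. For every continuous linear functional \<open>\<phi>\<close> on \<open>X\<close> and
  \<open>p \<in> P\<^sup>n(J,X)\<close>, the scalar function \<open>\<phi> \<circ> p\<close> lies in \<open>P\<close>. A finite dimensional space \<open>P\<close> of
  functions admits interpolation data: points \<open>j\<^sub>i\<close> and functions \<open>q\<^sub>i \<in> P\<close> with
  \<open>f = \<Sum>\<^sub>i f(j\<^sub>i) q\<^sub>i\<close> for all \<open>f \<in> P\<close>. Applied to \<open>\<phi> \<circ> p\<close> this gives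
  \<open>\<phi>(p y) = \<phi>(\<Sum>\<^sub>i q\<^sub>i(y) p(j\<^sub>i))\<close> for all \<open>\<phi>\<close>, and since \<open>X\<close> is locally convex and Hausdorff its
  continuous functionals separate points, whence \<open>p = \<Sum>\<^sub>i q\<^sub>i \<otimes> p(j\<^sub>i)\<close>. The separation is the
  Hahn--Banach theorem, obtained by Zorn's lemma on graphs of functionals dominated by the
  Minkowski functional of a convex neighbourhood of \<open>0\<close>.\<close>

section \<open>Locally convex spaces over \<open>\<complex>\<close>\<close>

locale lc_tvs_space =
  fixes sc :: "complex \<Rightarrow> 'x::{ab_group_add,t1_space} \<Rightarrow> 'x"
  assumes lc_tvs: "lc_tvs sc"
begin

sublocale vector_space sc
  using lc_tvs unfolding lc_tvs_def by auto

lemma continuous_on_vadd: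
  fixes f g :: "'a::topological_space \<Rightarrow> 'x"
  assumes "continuous_on S f" "continuous_on S g"
  shows "continuous_on S (\<lambda>t. f t + g t)"
proof -
  have "continuous_on UNIV (\<lambda>(a::'x, b). a + b)"
    using lc_tvs unfolding lc_tvs_def by auto
  then have "continuous_on S (\<lambda>t. (\<lambda>(a::'x, b). a + b) (f t, g t))"
    by (rule continuous_on_compose2) (auto intro: continuous_on_Pair assms)
  then show ?thesis by simp
qed

lemma continuous_on_scale:
  fixes f :: "'a::topological_space \<Rightarrow> complex" and g :: "'a \<Rightarrow> 'x"
  assumes "continuous_on S f" "continuous_on S g"
  shows "continuous_on S (\<lambda>t. sc (f t) (g t))"
proof -
  have "continuous_on UNIV (\<lambda>(c, x). sc c x)"
    using lc_tvs unfolding lc_tvs_def by auto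
  then have "continuous_on S (\<lambda>t. (\<lambda>(c, x). sc c x) (f t, g t))"
    by (rule continuous_on_compose2) (auto intro: continuous_on_Pair assms)
  then show ?thesis by simp
qed

lemma continuous_on_vsum:
  fixes f :: "nat \<Rightarrow> 'a::topological_space \<Rightarrow> 'x"
  assumes "\<And>i. i < l \<Longrightarrow> continuous_on S (f i)"
  shows "continuous_on S (\<lambda>t. \<Sum>i<l. f i t)"
  using assms by (induction l) (simp_all add: continuous_on_vadd)

lemma continuous_on_translate: "continuous_on UNIV (\<lambda>x. x - (x0::'x))"
  using continuous_on_vadd[OF continuous_on_id continuous_on_const, of UNIV "- x0"] by simp

definition sublinear :: "('x \<Rightarrow> real) \<Rightarrow> bool" where
  "sublinear p \<longleftrightarrow> (\<forall>x y. p (x + y) \<le> p x + p y)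
     \<and> (\<forall>r x. 0 < r \<longrightarrow> p (sc (of_real r) x) = r * p x)"

definition real_linear :: "('x \<Rightarrow> real) \<Rightarrow> bool" where
  "real_linear u \<longleftrightarrow> (\<forall>x y. u (x + y) = u x + u y) \<and> (\<forall>r x. u (sc (of_real r) x) = r * u x)"

definition continuous_linear_functional :: "('x \<Rightarrow> complex) \<Rightarrow> bool" where
  "continuous_linear_functional \<phi> \<longleftrightarrow> continuous_on UNIV \<phi>
     \<and> (\<forall>x y. \<phi> (x + y) = \<phi> x + \<phi> y) \<and> (\<forall>c x. \<phi> (sc c x) = c * \<phi> x)"

definition minkowski_set :: "'x set \<Rightarrow> 'x \<Rightarrow> real set" where
  "minkowski_set V x = {t. 0 < t \<and> sc (of_real (inverse t)) x \<in> V}"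

definition minkowski :: "'x set \<Rightarrow> 'x \<Rightarrow> real" where
  "minkowski V x = Inf (minkowski_set V x)"

context
  fixes V
  assumes V_open: "open V" and V_0: "0 \<in> V" and V_convex: "convex_wrt sc V"
begin

lemma convex_combination_in:
  "x \<in> V \<Longrightarrow> y \<in> V \<Longrightarrow> 0 \<le> u \<Longrightarrow> u \<le> 1 \<Longrightarrow> sc (of_real u) x + sc (of_real (1 - u)) y \<in> V"
  using V_convex unfolding convex_wrt_def by blast

lemma minkowski_set_nonempty: "minkowski_set V x \<noteq> {}"
proof -
  have "continuous_on UNIV (\<lambda>c. sc c x)"
    by (rule continuous_on_scale) (auto intro: continuous_on_id continuous_on_const)
  then have "open ((\<lambda>c. sc c x) -` V)"
    using V_open by (rule open_vimage[rotated])
  moreover have "0 \<in> (\<lambda>c. sc c x) -` V"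
    using V_0 by simp
  ultimately obtain d where d: "d > 0" "ball 0 d \<subseteq> (\<lambda>c. sc c x) -` V"
    by (meson openE)
  moreover have "of_real (d/2) \<in> ball (0::complex) d"
    using d by (simp add: dist_norm)
  ultimately have "sc (of_real (d/2)) x \<in> V"
    by blast
  then have "2/d \<in> minkowski_set V x"
    using d by (simp add: minkowski_set_def)
  then show ?thesis by auto
qed

lemma bdd_below_minkowski_set: "bdd_below (minkowski_set V x)"
  unfolding minkowski_set_def by (rule bdd_belowI[of _ 0]) auto

lemma minkowski_le:
  "t \<in> minkowski_set V x \<Longrightarrow> minkowski V x \<le> t"
  unfolding minkowski_def by (rule cInf_lower[OF _ bdd_below_minkowski_set])

lemma minkowski_nonneg: "0 \<le> minkowski V x"
  unfolding minkowski_def using minkowski_set_nonempty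
  by (rule cInf_greatest) (auto simp: minkowski_set_def)

lemma minkowski_set_upward:
  assumes "t \<in> minkowski_set V x" "t \<le> t'"
  shows "t' \<in> minkowski_set V x"
proof -
  have t: "0 < t" "sc (of_real (inverse t)) x \<in> V"
    using assms by (auto simp: minkowski_set_def)
  have "sc (of_real (t/t')) (sc (of_real (inverse t)) x) + sc (of_real (1 - t/t')) 0 \<in> V"
    using t V_0 assms(2) by (intro convex_combination_in) auto
  then have "sc (of_real (inverse t')) x \<in> V"
    using t by (simp add: field_simps)
  then show ?thesis
    using t assms(2) by (simp add: minkowski_set_def)
qed

lemma minkowski_set_add:
  assumes "t \<in> minkowski_set V x" "s \<in> minkowski_set V y"
  shows "t + s \<in> minkowski_set V (x + y)"
proof -
  have ts: "0 < t" "sc (of_real (inverse t)) x \<in> V" "0 < s" "sc (of_real (inverse s)) y \<in> V"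
    using assms by (auto simp: minkowski_set_def)
  have "sc (of_real (t/(t+s))) (sc (of_real (inverse t)) x)
      + sc (of_real (1 - t/(t+s))) (sc (of_real (inverse s)) y) \<in> V"
    using ts by (intro convex_combination_in) auto
  moreover have "1 - t/(t+s) = s/(t+s)"
    using ts by (simp add: field_simps)
  ultimately show ?thesis
    using ts by (simp add: minkowski_set_def field_simps)
qed

lemma minkowski_scale_le:
  assumes "0 < r"
  shows "minkowski V (sc (of_real r) x) \<le> r * minkowski V x"
proof -
  have "minkowski V (sc (of_real r) x) / r \<le> minkowski V x"
    unfolding minkowski_def[of V x]
  proof (rule cInf_greatest[OF minkowski_set_nonempty])
    fix t
    assume "t \<in> minkowski_set V x"
    then have "r * t \<in> minkowski_set V (sc (of_real r) x)"
      using assms by (auto simp: minkowski_set_def field_simps)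
    then show "minkowski V (sc (of_real r) x) / r \<le> t"
      using assms minkowski_le by (simp add: field_simps)
  qed
  then show ?thesis
    using assms by (simp add: field_simps)
qed

lemma minkowski_sublinear: "sublinear (minkowski V)"
  unfolding sublinear_def
proof (intro conjI allI impI)
  fix x y
  have "minkowski V (x + y) - minkowski V x \<le> s" if s: "s \<in> minkowski_set V y" for s
  proof -
    have "minkowski V (x + y) - s \<le> minkowski V x"
      unfolding minkowski_def[of V x]
      by (rule cInf_greatest[OF minkowski_set_nonempty])
        (use minkowski_le minkowski_set_add s in fastforce)
    then show ?thesis by simp
  qed
  then have "minkowski V (x + y) - minkowski V x \<le> minkowski V y"
    unfolding minkowski_def[of V y] by (intro cInf_greatest[OF minkowski_set_nonempty])
  then show "minkowski V (x + y) \<le> minkowski V x + minkowski V y"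
    by simp
next
  fix r :: real and x
  assume r: "0 < r"
  have "minkowski V x = minkowski V (sc (of_real (inverse r)) (sc (of_real r) x))"
    using r by simp
  also have "\<dots> \<le> inverse r * minkowski V (sc (of_real r) x)"
    using r by (intro minkowski_scale_le) auto
  finally have "r * minkowski V x \<le> minkowski V (sc (of_real r) x)"
    using r by (simp add: field_simps)
  with minkowski_scale_le[OF r, of x] show "minkowski V (sc (of_real r) x) = r * minkowski V x"
    by linarith
qed

lemma minkowski_le_1: "x \<in> V \<Longrightarrow> minkowski V x \<le> 1"
  by (rule minkowski_le) (simp add: minkowski_set_def)

lemma minkowski_ge_1:
  assumes "x \<notin> V"
  shows "1 \<le> minkowski V x"
proof (rule ccontr)
  assume "\<not> 1 \<le> minkowski V x"
  then obtain t where "t \<in> minkowski_set V x" "t < 1"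
    unfolding minkowski_def using minkowski_set_nonempty by (metis cInf_lessD not_le)
  then have "1 \<in> minkowski_set V x"
    using minkowski_set_upward by auto
  then show False
    using assms by (simp add: minkowski_set_def)
qed

end

subsection \<open>The Hahn--Banach theorem\<close>

text \<open>Graphs of real-linear functionals on subspaces that are dominated by \<open>p\<close>; the subspace and
  the linearity are both encoded as closure of the relation under addition and real scaling.\<close>

definition dominated_graph :: "('x \<Rightarrow> real) \<Rightarrow> ('x \<times> real) set \<Rightarrow> bool" where
  "dominated_graph p G \<longleftrightarrow> (\<forall>x a y b. (x, a) \<in> G \<longrightarrow> (y, b) \<in> G \<longrightarrow> (x + y, a + b) \<in> G)
     \<and> (\<forall>x a r. (x, a) \<in> G \<longrightarrow> (sc (of_real r) x, r * a) \<in> G)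
     \<and> (\<forall>x a. (x, a) \<in> G \<longrightarrow> a \<le> p x)"

context
  fixes p :: "'x \<Rightarrow> real"
  assumes p_sublinear: "sublinear p"
begin

lemma sublinear_add: "p (x + y) \<le> p x + p y"
  using p_sublinear unfolding sublinear_def by blast

lemma sublinear_scale: "0 < r \<Longrightarrow> p (sc (of_real r) x) = r * p x"
  using p_sublinear unfolding sublinear_def by blast

lemma sublinear_zero: "p 0 = 0"
  using sublinear_scale[of 2 0] by simp

lemma dominated_graphD:
  assumes "dominated_graph p G"
  shows "(x, a) \<in> G \<Longrightarrow> (y, b) \<in> G \<Longrightarrow> (x + y, a + b) \<in> G"
    and "(x, a) \<in> G \<Longrightarrow> (sc (of_real r) x, r * a) \<in> G"
    and "(x, a) \<in> G \<Longrightarrow> a \<le> p x"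
  using assms unfolding dominated_graph_def by blast+

lemma dominated_graph_unique:
  assumes G: "dominated_graph p G" and "(x, a) \<in> G" "(x, b) \<in> G"
  shows "a = b"
proof -
  have "a - b \<le> 0" if "(x, a) \<in> G" "(x, b) \<in> G" for a b
  proof -
    have "(sc (of_real (-1)) x, (-1) * b) \<in> G"
      by (rule dominated_graphD(2)[OF G that(2)])
    from dominated_graphD(1)[OF G that(1) this] have "(0, a - b) \<in> G"
      by simp
    from dominated_graphD(3)[OF G this] show ?thesis
      by (simp add: sublinear_zero)
  qed
  from this[OF assms(2,3)] this[OF assms(3,2)] show ?thesis
    by simp
qed

lemma dominated_graph_extension_value:
  assumes G: "dominated_graph p G" and G0: "(0, 0) \<in> G"
  obtains c where "\<And>x a. (x, a) \<in> G \<Longrightarrow> a - p (x - z) \<le> c"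
    and "\<And>x a. (x, a) \<in> G \<Longrightarrow> c \<le> p (x + z) - a"
proof
  define C where "C = {a - p (x - z) | x a. (x, a) \<in> G}"
  have bound: "b - p (w - z) \<le> p (x + z) - a" if "(w, b) \<in> G" "(x, a) \<in> G" for w b x a
  proof -
    have "b + a \<le> p (w + x)"
      using dominated_graphD(1,3)[OF G] that by blast
    also have "\<dots> \<le> p (w - z) + p (x + z)"
      using sublinear_add[of "w - z" "x + z"] by (simp add: algebra_simps)
    finally show ?thesis by simp
  qed
  have "bdd_above C"
    unfolding C_def by (rule bdd_aboveI[of _ "p (0 + z) - 0"]) (use bound G0 in blast)
  then show "a - p (x - z) \<le> Sup C" if "(x, a) \<in> G" for x a
    by (rule cSup_upper[rotated]) (use that C_def in blast)
  show "Sup C \<le> p (x + z) - a" if "(x, a) \<in> G" for x a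
    by (rule cSup_least) (use that bound G0 C_def in blast)+
qed

lemma dominated_graph_extend:
  assumes G: "dominated_graph p G" and G0: "(0, 0) \<in> G" and z: "\<nexists>a. (z, a) \<in> G"
  shows "\<exists>G'. dominated_graph p G' \<and> G \<subset> G'"
proof -
  obtain c where c_lower: "\<And>x a. (x, a) \<in> G \<Longrightarrow> a - p (x - z) \<le> c"
    and c_upper: "\<And>x a. (x, a) \<in> G \<Longrightarrow> c \<le> p (x + z) - a"
    using dominated_graph_extension_value[OF G G0] by metis
  define G' where "G' = {(x + sc (of_real r) z, a + r * c) | x a r. (x, a) \<in> G}"
  have dominated: "a + r * c \<le> p (x + sc (of_real r) z)" if "(x, a) \<in> G" for x a r
  proof (cases r "0::real" rule: linorder_cases)
    case equal
    then show ?thesis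
      using dominated_graphD(3)[OF G that] by simp
  next
    case greater
    have "(sc (of_real (1/r)) x, (1/r) * a) \<in> G"
      by (rule dominated_graphD(2)[OF G that])
    from c_upper[OF this] have "a + r * c \<le> r * p (sc (of_real (1/r)) x + z)"
      using greater by (simp add: field_simps)
    also have "\<dots> = p (x + sc (of_real r) z)"
      using greater by (simp add: sublinear_scale[symmetric] scale_right_distrib)
    finally show ?thesis .
  next
    case less
    have "(sc (of_real (-1/r)) x, (-1/r) * a) \<in> G"
      by (rule dominated_graphD(2)[OF G that])
    from c_lower[OF this] have "a + r * c \<le> (-r) * p (sc (of_real (-1/r)) x - z)"
      using less by (simp add: field_simps)
    also have "\<dots> = p (sc (of_real (-r)) (sc (of_real (-1/r)) x - z))"
      using less sublinear_scale[of "-r"] by simp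
    also have "sc (of_real (-r)) (sc (of_real (-1/r)) x - z) = x + sc (of_real r) z"
      using less by (simp add: scale_right_diff_distrib)
    finally show ?thesis .
  qed
  have "dominated_graph p G'"
    unfolding dominated_graph_def
  proof (intro conjI allI impI)
    fix x a y b
    assume "(x, a) \<in> G'" "(y, b) \<in> G'"
    then obtain x1 a1 r1 x2 a2 r2 where h: "(x1, a1) \<in> G" "(x2, a2) \<in> G"
      "x = x1 + sc (of_real r1) z" "a = a1 + r1 * c" "y = x2 + sc (of_real r2) z" "b = a2 + r2 * c"
      unfolding G'_def by blast
    have "(x1 + x2, a1 + a2) \<in> G"
      by (rule dominated_graphD(1)[OF G h(1,2)])
    moreover have "x + y = (x1 + x2) + sc (of_real (r1 + r2)) z" "a + b = (a1 + a2) + (r1 + r2) * c"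
      using h by (simp_all add: algebra_simps)
    ultimately show "(x + y, a + b) \<in> G'"
      unfolding G'_def by blast
  next
    fix x a t
    assume "(x, a) \<in> G'"
    then obtain x1 a1 r where h: "(x1, a1) \<in> G" "x = x1 + sc (of_real r) z" "a = a1 + r * c"
      unfolding G'_def by blast
    have "(sc (of_real t) x1, t * a1) \<in> G"
      by (rule dominated_graphD(2)[OF G h(1)])
    moreover have "sc (of_real t) x = sc (of_real t) x1 + sc (of_real (t * r)) z" "t * a = t * a1 + (t * r) * c"
      using h by (simp_all add: algebra_simps)
    ultimately show "(sc (of_real t) x, t * a) \<in> G'"
      unfolding G'_def by blast
  next
    fix x a
    assume "(x, a) \<in> G'"
    then show "a \<le> p x"
      unfolding G'_def using dominated by blast
  qed
  moreover have "G \<subseteq> G'"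
    unfolding G'_def by (force intro: exI[of _ 0])
  moreover have "(z, c) \<in> G'"
    unfolding G'_def using G0 by (force intro: exI[of _ 1])
  ultimately show ?thesis
    using z by blast
qed

lemma dominated_graph_Union_chain:
  assumes "C \<in> chains {G. dominated_graph p G}"
  shows "dominated_graph p (\<Union>C)"
proof -
  have dom: "\<And>G. G \<in> C \<Longrightarrow> dominated_graph p G"
    and chain: "\<And>G H. G \<in> C \<Longrightarrow> H \<in> C \<Longrightarrow> G \<subseteq> H \<or> H \<subseteq> G"
    using assms unfolding chains_def chain_subset_def by auto
  show ?thesis
    unfolding dominated_graph_def
  proof (intro conjI allI impI)
    fix x a y b
    assume "(x, a) \<in> \<Union>C" "(y, b) \<in> \<Union>C"
    then obtain G H where GH: "G \<in> C" "H \<in> C" "(x, a) \<in> G" "(y, b) \<in> H"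
      by blast
    from chain[OF GH(1,2)] show "(x + y, a + b) \<in> \<Union>C"
      using dominated_graphD(1)[OF dom] GH by blast
  next
    fix x a r
    assume "(x, a) \<in> \<Union>C"
    then show "(sc (of_real r) x, r * a) \<in> \<Union>C"
      using dominated_graphD(2)[OF dom] by blast
  next
    fix x a
    assume "(x, a) \<in> \<Union>C"
    then show "a \<le> p x"
      using dominated_graphD(3)[OF dom] by blast
  qed
qed

theorem hahn_banach:
  assumes G0: "dominated_graph p G0" "G0 \<noteq> {}"
  obtains u where "real_linear u" "\<And>x. u x \<le> p x" "\<And>x a. (x, a) \<in> G0 \<Longrightarrow> u x = a"
proof -
  define A where "A = {G. dominated_graph p G \<and> G0 \<subseteq> G}"
  have "\<exists>M\<in>A. \<forall>G\<in>A. M \<subseteq> G \<longrightarrow> G = M"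
  proof (rule Zorn_Lemma2, intro ballI)
    fix C
    assume C: "C \<in> chains A"
    then have "C \<in> chains {G. dominated_graph p G}"
      unfolding A_def chains_def chain_subset_def by blast
    then have "dominated_graph p (\<Union>C)"
      by (rule dominated_graph_Union_chain)
    moreover have "G0 \<subseteq> \<Union>C" if "G \<in> C" for G
      using C that unfolding A_def chains_def by blast
    ultimately have "C \<noteq> {} \<Longrightarrow> \<Union>C \<in> A"
      unfolding A_def by blast
    moreover have "G0 \<in> A"
      using G0(1) unfolding A_def by blast
    ultimately show "\<exists>U\<in>A. \<forall>G\<in>C. G \<subseteq> U"
      by (cases "C = {}") auto
  qed
  then obtain M where "M \<in> A" and maximal_in_A: "\<And>G. G \<in> A \<Longrightarrow> M \<subseteq> G \<Longrightarrow> G = M"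
    by blast
  then have M: "dominated_graph p M" "G0 \<subseteq> M"
    unfolding A_def by auto
  have maximal: "G = M" if "dominated_graph p G" "M \<subseteq> G" for G
    using maximal_in_A[of G] that M(2) unfolding A_def by auto
  obtain x0 a0 where "(x0, a0) \<in> M"
    using G0(2) M(2) by auto
  from dominated_graphD(2)[OF M(1) this, of 0] have M0: "(0, 0) \<in> M"
    by simp
  have total: "\<exists>a. (z, a) \<in> M" for z
    using dominated_graph_extend[OF M(1) M0] maximal by blast
  define u where "u z = (THE a. (z, a) \<in> M)" for z
  have u_in_M: "(z, u z) \<in> M" for z
    unfolding u_def using total[of z] dominated_graph_unique[OF M(1)] by (metis theI)
  have u_eq: "(z, a) \<in> M \<Longrightarrow> u z = a" for z a
    using dominated_graph_unique[OF M(1) u_in_M] by blast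
  show thesis
  proof
    show "real_linear u"
      unfolding real_linear_def
    proof (intro conjI allI)
      show "u (x + y) = u x + u y" for x y
        by (rule u_eq, rule dominated_graphD(1)[OF M(1) u_in_M u_in_M])
      show "u (sc (of_real r) x) = r * u x" for r x
        by (rule u_eq, rule dominated_graphD(2)[OF M(1) u_in_M])
    qed
    show "u x \<le> p x" for x
      by (rule dominated_graphD(3)[OF M(1) u_in_M])
    show "u x = a" if "(x, a) \<in> G0" for x a
      using that M(2) u_eq by blast
  qed
qed

end

lemma real_linear_diff: "real_linear u \<Longrightarrow> u (x - y) = u x - u y"
  unfolding real_linear_def by (metis add_diff_cancel diff_add_cancel)

lemma continuous_if_dominated_by_minkowski:
  assumes V: "open V" "0 \<in> V" "convex_wrt sc V"
    and u: "real_linear u" "\<And>x. u x \<le> minkowski V x"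
  shows "continuous_on UNIV u"
  unfolding continuous_on_topological
proof (intro ballI allI impI)
  fix x0 :: 'x and B :: "real set"
  assume "open B" "u x0 \<in> B"
  then obtain e where e: "e > 0" "ball (u x0) e \<subseteq> B"
    by (meson openE)
  define k where "k = 2 / e"
  have k: "k > 0"
    using e k_def by simp
  define A where "A = (\<lambda>x. sc (of_real k) (x - x0)) -` V \<inter> (\<lambda>x. sc (of_real (-k)) (x - x0)) -` V"
  have "open A"
    unfolding A_def
    by (intro open_Int open_vimage[OF V(1)] continuous_on_scale continuous_on_const continuous_on_translate)
  moreover have "x0 \<in> A"
    unfolding A_def using V(2) by simp
  moreover have "u x \<in> B" if "x \<in> A" for x
  proof -
    have bound: "s * u (x - x0) \<le> 1" if "sc (of_real s) (x - x0) \<in> V" for s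
      using u minkowski_le_1[OF V that] unfolding real_linear_def by (metis order.trans)
    have "sc (of_real k) (x - x0) \<in> V" "sc (of_real (-k)) (x - x0) \<in> V"
      using \<open>x \<in> A\<close> unfolding A_def by auto
    then have "k * u (x - x0) \<le> 1" "(-k) * u (x - x0) \<le> 1"
      using bound by blast+
    then have "\<bar>u (x - x0)\<bar> \<le> 1 / k"
      using k by (simp add: field_simps abs_le_iff)
    also have "1 / k < e"
      using e k_def by simp
    finally have "dist (u x0) (u x) < e"
      using real_linear_diff[OF u(1)] by (simp add: dist_real_def abs_minus_commute)
    then show ?thesis
      using e by auto
  qed
  ultimately show "\<exists>A. open A \<and> x0 \<in> A \<and> (\<forall>x\<in>UNIV. x \<in> A \<longrightarrow> u x \<in> B)"
    by blast
qed

text \<open>A continuous real-linear \<open>u\<close> is the real part of the complex-linear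
  \<open>x \<mapsto> u x - \<i> u(\<i> x)\<close>.\<close>

lemma complexify_real_linear:
  assumes u: "real_linear u" "continuous_on UNIV u"
  obtains \<phi> where "continuous_linear_functional \<phi>" "\<And>x. Re (\<phi> x) = u x"
proof -
  define \<phi> where "\<phi> x = complex_of_real (u x) - \<i> * complex_of_real (u (sc \<i> x))" for x
  have add: "u (x + y) = u x + u y" and real_scale: "u (sc (of_real r) x) = r * u x" for x y r
    using u(1) unfolding real_linear_def by blast+
  have scale: "u (sc c x) = Re c * u x + Im c * u (sc \<i> x)" for c x
  proof -
    have "of_real (Re c) + of_real (Im c) * \<i> = c"
      by (simp add: complex_eq_iff)
    then have "sc c x = sc (of_real (Re c)) x + sc (of_real (Im c)) (sc \<i> x)"
      by (metis scale_left_distrib scale_scale)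
    then show ?thesis
      by (simp only: add real_scale)
  qed
  have "continuous_on UNIV (\<lambda>x. u (sc \<i> x))"
    by (rule continuous_on_compose2[OF u(2)])
      (auto intro: continuous_on_scale continuous_on_const continuous_on_id)
  then have "continuous_on UNIV \<phi>"
    unfolding \<phi>_def by (intro continuous_intros u(2)) auto
  moreover have "\<phi> (sc c x) = c * \<phi> x" for c x
  proof -
    have "u (sc \<i> (sc c x)) = - Im c * u x + Re c * u (sc \<i> x)"
      using scale[of "\<i> * c" x] by simp
    then show ?thesis
      unfolding \<phi>_def scale[of c x] by (simp add: complex_eq_iff algebra_simps)
  qed
  ultimately have "continuous_linear_functional \<phi>"
    unfolding continuous_linear_functional_def \<phi>_def
    by (simp add: add algebra_simps)
  moreover have "Re (\<phi> x) = u x" for x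
    unfolding \<phi>_def by simp
  ultimately show thesis
    by (rule that)
qed

lemma dominated_graph_line:
  assumes "sublinear p" "\<And>x. 0 \<le> p x"
  shows "dominated_graph p {(sc (of_real r) y, r * p y) | r. True}"
  unfolding dominated_graph_def
proof (intro conjI allI impI)
  fix x a z b
  assume "(x, a) \<in> {(sc (of_real r) y, r * p y) | r. True}" "(z, b) \<in> {(sc (of_real r) y, r * p y) | r. True}"
  then obtain r s where "x = sc (of_real r) y" "a = r * p y" "z = sc (of_real s) y" "b = s * p y"
    by blast
  then have "(x + z, a + b) = (sc (of_real (r + s)) y, (r + s) * p y)"
    by (simp add: algebra_simps)
  then show "(x + z, a + b) \<in> {(sc (of_real r) y, r * p y) | r. True}"
    by blast
next
  fix x a t
  assume "(x, a) \<in> {(sc (of_real r) y, r * p y) | r. True}"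
  then obtain r where "x = sc (of_real r) y" "a = r * p y"
    by blast
  then have "(sc (of_real t) x, t * a) = (sc (of_real (t * r)) y, (t * r) * p y)"
    by simp
  then show "(sc (of_real t) x, t * a) \<in> {(sc (of_real r) y, r * p y) | r. True}"
    by blast
next
  fix x a
  assume "(x, a) \<in> {(sc (of_real r) y, r * p y) | r. True}"
  then obtain r where r: "x = sc (of_real r) y" "a = r * p y"
    by blast
  show "a \<le> p x"
  proof (cases "0 < r")
    case True
    then show ?thesis
      using r sublinear_scale[OF assms(1)] by simp
  next
    case False
    then have "r * p y \<le> 0"
      using assms(2)[of y] by (simp add: mult_nonpos_nonneg)
    then show ?thesis
      using r assms(2)[of x] by simp
  qed
qed

lemma separating_functional:
  assumes "y \<noteq> 0"
  obtains \<phi> where "continuous_linear_functional \<phi>" "\<phi> y \<noteq> 0"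
proof -
  obtain U where U: "open U" "0 \<in> U" "y \<notin> U"
    using t1_space[of 0 y] assms by metis
  obtain V where V: "open V" "0 \<in> V" "convex_wrt sc V" "V \<subseteq> U"
    using lc_tvs U unfolding lc_tvs_def by blast
  note p = minkowski_sublinear[OF V(1-3)] minkowski_nonneg[OF V(1-3)]
  let ?line = "{(sc (of_real r) y, r * minkowski V y) | r. True}"
  have "?line \<noteq> {}"
    by blast
  then obtain u where u: "real_linear u" "\<And>x. u x \<le> minkowski V x"
    and u_line: "\<And>x a. (x, a) \<in> ?line \<Longrightarrow> u x = a"
    using hahn_banach[OF p(1) dominated_graph_line[OF p]] by blast
  have "(y, 1 * minkowski V y) \<in> ?line"
    by (rule CollectI, rule exI[of _ 1]) simp
  then have "u y = minkowski V y"
    using u_line by simp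
  also have "\<dots> \<ge> 1"
    using minkowski_ge_1[OF V(1-3)] U(3) V(4) by blast
  finally have "u y \<noteq> 0"
    by simp
  obtain \<phi> where "continuous_linear_functional \<phi>" "\<And>x. Re (\<phi> x) = u x"
    using complexify_real_linear[OF u(1) continuous_if_dominated_by_minkowski[OF V(1-3) u]] by blast
  with \<open>u y \<noteq> 0\<close> show thesis
    by (metis that zero_complex.sel(1))
qed

lemma eq_if_continuous_linear_functionals_eq:
  assumes "\<And>\<phi>. continuous_linear_functional \<phi> \<Longrightarrow> \<phi> x = \<phi> y"
  shows "x = y"
proof (rule ccontr)
  assume "x \<noteq> y"
  then obtain \<phi> where \<phi>: "continuous_linear_functional \<phi>" "\<phi> (x - y) \<noteq> 0"
    using separating_functional[of "x - y"] by auto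
  then have "\<phi> (x - y) = \<phi> x - \<phi> y"
    unfolding continuous_linear_functional_def by (metis add_diff_cancel diff_add_cancel)
  with \<phi> assms show False
    by simp
qed

end

section \<open>Interpolation in finite dimensional function spaces\<close>

lemma (in vector_space) subspace_span_insert_generator:
  assumes P: "subspace P" and P_span: "P \<subseteq> span (insert b B)"
  shows "\<exists>g\<in>P. \<forall>f\<in>P. \<exists>a. f - scale a g \<in> span B"
proof (cases "P \<subseteq> span B")
  case True
  then show ?thesis
    using subspace_0[OF P] by (intro bexI[of _ 0]) auto
next
  case False
  then obtain g where g: "g \<in> P" "g \<notin> span B"
    by blast
  then obtain kg where kg: "g - scale kg b \<in> span B"
    using P_span span_breakdown_eq by blast
  with g have "kg \<noteq> 0"
    by auto
  have "\<exists>a. f - scale a g \<in> span B" if f: "f \<in> P" for f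
  proof -
    obtain k where "f - scale k b \<in> span B"
      using f P_span span_breakdown_eq by blast
    then have "(f - scale k b) - scale (k / kg) (g - scale kg b) \<in> span B"
      by (rule span_diff[OF _ span_scale[OF kg]])
    then have "f - scale (k / kg) g \<in> span B"
      using \<open>kg \<noteq> 0\<close> by (simp add: algebra_simps)
    then show ?thesis ..
  qed
  with g show ?thesis
    by blast
qed

interpretation fscale: vector_space "fscale :: complex \<Rightarrow> ('j \<Rightarrow> complex) \<Rightarrow> 'j \<Rightarrow> complex"
  by unfold_locales (auto simp: fscale_def fun_eq_iff algebra_simps)

lemma sum_fscale_apply: "(\<Sum>i\<in>A. fscale (c i) (q i)) x = (\<Sum>i\<in>A. c i * q i x)"
  by (induction A rule: infinite_finite_induct) (simp_all add: fscale_def)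

lemma subspace_interpolation_residual:
  assumes "fscale.subspace P" "f \<in> P" "\<And>i. i < l \<Longrightarrow> q i \<in> P"
  shows "(\<lambda>x. f x - (\<Sum>i<l. c i * q i x)) \<in> P"
proof -
  have "f - (\<Sum>i<l. fscale (c i) (q i)) \<in> P"
    using assms by (intro fscale.subspace_diff fscale.subspace_sum fscale.subspace_scale) auto
  then show ?thesis
    by (simp add: fun_diff_def sum_fscale_apply)
qed

definition interpolation_family :: "('j \<Rightarrow> complex) set \<Rightarrow> nat \<Rightarrow> (nat \<Rightarrow> 'j \<Rightarrow> complex) \<Rightarrow> (nat \<Rightarrow> 'j) \<Rightarrow> bool" where
  "interpolation_family P l q j \<longleftrightarrow> (\<forall>i<l. q i \<in> P) \<and> (\<forall>f\<in>P. \<forall>x. f x = (\<Sum>i<l. f (j i) * q i x))"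

text \<open>The interpolation residual \<open>T f\<close> of the old family vanishes on \<open>P'\<close>, so on \<open>P\<close> it is a
  multiple of \<open>T g\<close>; one new node at a point where \<open>T g\<close> does not vanish absorbs it.\<close>

lemma interpolation_family_extend:
  assumes P: "fscale.subspace P" and P': "P' \<subseteq> P" and fam: "interpolation_family P' l q j"
    and g: "g \<in> P" and decomp: "\<And>f. f \<in> P \<Longrightarrow> \<exists>a. f - fscale a g \<in> P'"
  shows "\<exists>l q j. interpolation_family P l q j"
proof -
  define T where "T f x = f x - (\<Sum>i<l. f (j i) * q i x)" for f x
  have q_P: "q i \<in> P" if "i < l" for i
    using fam P' that unfolding interpolation_family_def by blast
  have T_P: "T f \<in> P" if "f \<in> P" for f
    unfolding T_def by (rule subspace_interpolation_residual[OF P that q_P])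
  have T_multiple: "\<exists>a. \<forall>y. T f y = a * T g y" if "f \<in> P" for f
  proof -
    obtain a where "f - fscale a g \<in> P'"
      using decomp \<open>f \<in> P\<close> by blast
    then have "\<forall>y. (f - fscale a g) y = (\<Sum>i<l. (f - fscale a g) (j i) * q i y)"
      using fam unfolding interpolation_family_def by blast
    then have "T f y = a * T g y" for y
      by (simp add: T_def fscale_def algebra_simps sum_subtractf sum_distrib_left)
    then show ?thesis
      by blast
  qed
  show ?thesis
  proof (cases "\<exists>x0. T g x0 \<noteq> 0")
    case False
    then have "T f x = 0" if "f \<in> P" for f x
      using T_multiple[OF that] by auto
    then have "interpolation_family P l q j"
      unfolding interpolation_family_def T_def using q_P by auto
    then show ?thesis
      by blast
  next
    case True
    then obtain x0 where x0: "T g x0 \<noteq> 0"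
      by blast
    define r where "r = T g"
    have r_x0: "r x0 \<noteq> 0"
      using x0 r_def by simp
    define q' where "q' i = (if i < l then (\<lambda>x. q i x - q i x0 / r x0 * r x) else (\<lambda>x. r x / r x0))" for i
    define j' where "j' i = (if i < l then j i else x0)" for i
    have "interpolation_family P (Suc l) q' j'"
      unfolding interpolation_family_def
    proof (intro conjI allI impI ballI)
      fix i
      assume "i < Suc l"
      have "r \<in> P"
        unfolding r_def by (rule T_P[OF g])
      then have "q i - fscale (q i x0 / r x0) r \<in> P" if "i < l"
        using q_P[OF that] by (intro fscale.subspace_diff[OF P] fscale.subspace_scale[OF P])
      moreover have "fscale (1 / r x0) r \<in> P"
        using \<open>r \<in> P\<close> by (rule fscale.subspace_scale[OF P])
      ultimately show "q' i \<in> P"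
        by (auto simp: q'_def fscale_def fun_diff_def)
    next
      fix f x
      assume f: "f \<in> P"
      have "(\<Sum>i<Suc l. f (j' i) * q' i x)
          = (\<Sum>i<l. f (j i) * q i x) - (\<Sum>i<l. f (j i) * q i x0) * r x / r x0 + f x0 * r x / r x0"
        by (simp add: j'_def q'_def right_diff_distrib sum_subtractf sum_divide_distrib sum_distrib_right mult.assoc)
      also have "\<dots> = (\<Sum>i<l. f (j i) * q i x) + T f x0 / r x0 * r x"
        using r_x0 by (simp add: T_def field_simps)
      also have "T f x0 / r x0 * r x = T f x"
        using T_multiple[OF f] r_x0 unfolding r_def by auto
      also have "(\<Sum>i<l. f (j i) * q i x) + T f x = f x"
        by (simp add: T_def)
      finally show "f x = (\<Sum>i<Suc l. f (j' i) * q' i x)"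
        by simp
    qed
    then show ?thesis
      by blast
  qed
qed

lemma finite_span_interpolation_family:
  assumes "finite B" "fscale.subspace P" "P \<subseteq> fscale.span B"
  shows "\<exists>l q j. interpolation_family P l q j"
  using assms
proof (induction B arbitrary: P rule: finite_induct)
  case empty
  then have "interpolation_family P 0 q j" for q j
    by (auto simp: interpolation_family_def)
  then show ?case
    by blast
next
  case (insert b B)
  let ?P' = "P \<inter> fscale.span B"
  have "fscale.subspace ?P'"
    by (rule fscale.subspace_inter[OF insert.prems(1) fscale.subspace_span])
  then obtain l q j where fam: "interpolation_family ?P' l q j"
    using insert.IH by blast
  obtain g where "g \<in> P" and g: "\<And>f. f \<in> P \<Longrightarrow> \<exists>a. f - fscale a g \<in> fscale.span B"
    using fscale.subspace_span_insert_generator[OF insert.prems] by blast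
  have "\<exists>a. f - fscale a g \<in> ?P'" if f: "f \<in> P" for f
  proof -
    obtain a where "f - fscale a g \<in> fscale.span B"
      using g[OF f] by blast
    moreover have "f - fscale a g \<in> P"
      using insert.prems(1) f \<open>g \<in> P\<close> by (intro fscale.subspace_diff fscale.subspace_scale)
    ultimately show ?thesis
      by blast
  qed
  then show ?case
    by (rule interpolation_family_extend[OF insert.prems(1) Int_lower1 fam \<open>g \<in> P\<close>])
qed

section \<open>Polynomials on the semigroup\<close>

lemma Pn_subspace: "fscale.subspace (Pn (*) n :: ('j::{ab_semigroup_add,topological_space} \<Rightarrow> complex) set)"
  unfolding fscale.subspace_def
proof (intro conjI ballI allI)
  show "0 \<in> (Pn (*) n :: ('j \<Rightarrow> complex) set)"
    unfolding Pn_def zero_fun_def by (auto intro!: exI[of _ "\<lambda>k. 0"])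
next
  fix f g :: "'j \<Rightarrow> complex" and a :: complex
  assume f: "f \<in> Pn (*) n" and g: "g \<in> Pn (*) n"
  show "fscale a f \<in> Pn (*) n"
    unfolding Pn_def fscale_def
  proof (intro CollectI conjI allI)
    show "continuous_on UNIV (\<lambda>x. a * f x)"
      by (intro continuous_on_mult_left) (use f in \<open>simp add: Pn_def\<close>)
    fix s t
    obtain c where "\<And>m. f (smul_shift s m t) = (\<Sum>k\<le>n. of_nat m ^ k * c k)"
      using f unfolding Pn_def by blast
    then show "\<exists>c. \<forall>m. a * f (smul_shift s m t) = (\<Sum>k\<le>n. of_nat m ^ k * c k)"
      by (intro exI[of _ "\<lambda>k. a * c k"]) (simp add: sum_distrib_left algebra_simps)
  qed
  show "f + g \<in> Pn (*) n"
    unfolding Pn_def plus_fun_def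
  proof (intro CollectI conjI allI)
    show "continuous_on UNIV (\<lambda>x. f x + g x)"
      by (intro continuous_on_add) (use f g in \<open>simp_all add: Pn_def\<close>)
    fix s t
    obtain cf where "\<And>m. f (smul_shift s m t) = (\<Sum>k\<le>n. of_nat m ^ k * cf k)"
      using f unfolding Pn_def by blast
    moreover obtain cg where "\<And>m. g (smul_shift s m t) = (\<Sum>k\<le>n. of_nat m ^ k * cg k)"
      using g unfolding Pn_def by blast
    ultimately show "\<exists>c. \<forall>m. f (smul_shift s m t) + g (smul_shift s m t) = (\<Sum>k\<le>n. of_nat m ^ k * c k)"
      by (intro exI[of _ "\<lambda>k. cf k + cg k"]) (simp add: sum.distrib algebra_simps)
  qed
qed

context lc_tvs_space
begin

lemma continuous_linear_functional_comp_Pn: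
  assumes \<phi>: "continuous_linear_functional \<phi>" and p: "p \<in> Pn sc n"
  shows "(\<lambda>j. \<phi> (p j)) \<in> Pn (*) n"
proof -
  interpret \<phi>: additive \<phi>
    using \<phi> unfolding continuous_linear_functional_def by unfold_locales blast
  have \<phi>_scale: "\<phi> (sc c x) = c * \<phi> x" for c x
    using \<phi> unfolding continuous_linear_functional_def by blast
  show ?thesis
    unfolding Pn_def
  proof (intro CollectI conjI allI)
    show "continuous_on UNIV (\<lambda>j. \<phi> (p j))"
      using \<phi> p unfolding continuous_linear_functional_def Pn_def
      by (auto intro: continuous_on_compose2)
    fix s t
    obtain c where "\<And>m. p (smul_shift s m t) = (\<Sum>k\<le>n. sc (of_nat m ^ k) (c k))"
      using p unfolding Pn_def by blast
    then show "\<exists>c. \<forall>m. \<phi> (p (smul_shift s m t)) = (\<Sum>k\<le>n. of_nat m ^ k * c k)"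
      by (intro exI[of _ "\<lambda>k. \<phi> (c k)"]) (simp add: \<phi>.sum \<phi>_scale)
  qed
qed

lemma Pn_tensor_sum:
  fixes l :: nat
  assumes q: "\<And>i. i < l \<Longrightarrow> q i \<in> Pn (*) n"
  shows "(\<lambda>j. \<Sum>i<l. sc (q i j) (x i)) \<in> Pn sc n"
  unfolding Pn_def
proof (intro CollectI conjI allI)
  show "continuous_on UNIV (\<lambda>j. \<Sum>i<l. sc (q i j) (x i))"
    by (intro continuous_on_vsum continuous_on_scale continuous_on_const) (use q in \<open>auto simp: Pn_def\<close>)
  fix s t
  have "\<forall>i. \<exists>c. i < l \<longrightarrow> (\<forall>m. q i (smul_shift s m t) = (\<Sum>k\<le>n. of_nat m ^ k * c k))"
    using q unfolding Pn_def by blast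
  then obtain C where C: "\<And>i m. i < l \<Longrightarrow> q i (smul_shift s m t) = (\<Sum>k\<le>n. of_nat m ^ k * C i k)"
    by metis
  have expand: "(\<Sum>i<l. sc (q i (smul_shift s m t)) (x i)) = (\<Sum>k\<le>n. sc (of_nat m ^ k) (\<Sum>i<l. sc (C i k) (x i)))" for m
  proof -
    have "(\<Sum>i<l. sc (q i (smul_shift s m t)) (x i)) = (\<Sum>i<l. \<Sum>k\<le>n. sc (of_nat m ^ k) (sc (C i k) (x i)))"
      by (intro sum.cong) (simp_all add: C scale_sum_left)
    also have "\<dots> = (\<Sum>k\<le>n. sc (of_nat m ^ k) (\<Sum>i<l. sc (C i k) (x i)))"
      by (subst sum.swap) (simp add: scale_sum_right)
    finally show ?thesis .
  qed
  show "\<exists>c. \<forall>m. (\<Sum>i<l. sc (q i (smul_shift s m t)) (x i)) = (\<Sum>k\<le>n. sc (of_nat m ^ k) (c k))"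
    by (intro exI[of _ "\<lambda>k. \<Sum>i<l. sc (C i k) (x i)"] allI expand)
qed

lemma Pn_interpolation_expansion:
  assumes fam: "interpolation_family (Pn (*) n) l q j" and p: "p \<in> Pn sc n"
  shows "p y = (\<Sum>i<l. sc (q i y) (p (j i)))"
proof (rule eq_if_continuous_linear_functionals_eq)
  fix \<phi>
  assume \<phi>: "continuous_linear_functional \<phi>"
  interpret \<phi>: additive \<phi>
    using \<phi> unfolding continuous_linear_functional_def by unfold_locales blast
  have "\<forall>f\<in>Pn (*) n. \<forall>x. f x = (\<Sum>i<l. f (j i) * q i x)"
    using fam unfolding interpolation_family_def by blast
  from this[rule_format, OF continuous_linear_functional_comp_Pn[OF \<phi> p]]
  have "\<phi> (p y) = (\<Sum>i<l. \<phi> (p (j i)) * q i y)" .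
  also have "\<dots> = \<phi> (\<Sum>i<l. sc (q i y) (p (j i)))"
    using \<phi> unfolding continuous_linear_functional_def by (simp add: \<phi>.sum mult.commute)
  finally show "\<phi> (p y) = \<phi> (\<Sum>i<l. sc (q i y) (p (j i)))" .
qed

end

theorem lemma3p1:
  fixes sc :: "complex \<Rightarrow> 'x::{ab_group_add,t2_space} \<Rightarrow> 'x"
    and n :: nat
  assumes "ab_top_semigroup TYPE('j::{ab_semigroup_add,topological_space})"
    and "lc_tvs sc"
    and "\<exists>B. finite B \<and> (Pn (*) n :: ('j \<Rightarrow> complex) set) \<subseteq> module.span fscale B"
  shows "(Pn sc n :: ('j \<Rightarrow> 'x) set) =
    {(\<lambda>j. \<Sum>i<l. sc (q i j) (x i)) | (l::nat) q x. \<forall>i<l. q i \<in> (Pn (*) n :: ('j \<Rightarrow> complex) set)}"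
proof -
  interpret lc_tvs_space sc
    by unfold_locales (rule assms(2))
  obtain B where "finite B" "(Pn (*) n :: ('j \<Rightarrow> complex) set) \<subseteq> fscale.span B"
    using assms(3) by blast
  then obtain l q j where fam: "interpolation_family (Pn (*) n :: ('j \<Rightarrow> complex) set) l q j"
    using finite_span_interpolation_family[OF _ Pn_subspace] by blast
  show ?thesis
  proof (intro equalityI subsetI)
    fix p :: "'j \<Rightarrow> 'x"
    assume "p \<in> Pn sc n"
    then have p_eq: "p = (\<lambda>y. \<Sum>i<l. sc (q i y) (p (j i)))"
      using Pn_interpolation_expansion[OF fam] by blast
    have q_Pn: "\<forall>i<l. q i \<in> Pn (*) n"
      using fam unfolding interpolation_family_def by blast
    show "p \<in> {(\<lambda>j. \<Sum>i<l. sc (q i j) (x i)) | (l::nat) q x. \<forall>i<l. q i \<in> Pn (*) n}"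
      by (intro CollectI exI[of _ l] exI[of _ q] exI[of _ "\<lambda>i. p (j i)"] conjI p_eq q_Pn)
  qed (auto intro: Pn_tensor_sum)
qed

end
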